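(* Assume $\theta_i<1$ for all $i$ and $\theta_j>0$ for some $j$. Suppose $\mathcal G(C)$ is a star topology with center node $l$ and $0<\theta_l<1$. Then: (i) for every $i\in\mathcal V_p\setminus\{l\}$ with $C_{li}=0$ and every $x(0)\in\Delta_n$, the trajectory of system (A) satisfies that $x_i(s)$ converges exponentially to $\dfrac{n-\sqrt{n^2-4n\theta_i(1-\theta_i)}}{2n\theta_i}$; (ii) if moreover $C_{li}=0$ for all $i\in\mathcal V_p\setminus\{l\}$ and $\sum_{j\in\mathcal V_p\setminus\{l\}}\theta_j\le \dfrac{4n}{5}-1$, then for every $x(0)\in\Delta_n$ the trajectory of system (A) converges exponentially to the unique equilibrium $x^*$ given by $x^*_i=\dfrac{n-\sqrt{n^2-4n\theta_i(1-\theta_i)}}{2n\theta_i}$ for $i\in\mathcal V_p\setminus\{l\}$, $x^*_l=\dfrac{n-\sqrt{n^2-4n\theta_l(1-\theta_l)\xi^*}}{2n\theta_l}$, and $x^*_i=\dfrac1n+\big(\dfrac{\xi^*}{n}-x^*_l\big)C_{li}$ for $i\in\mathcal V_f$, where $\xi^*=n-r-n\sum_{j\in\mathcal V_p\setminus\{l\}}x^*_j$ and $r=|\mathcal V_f|$.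
   Context: Let $n\ge 2$, $\mathbf 1_n$ the all-ones vector, $I_n$ the identity matrix, $\Delta_n=\{x\in\mathbb R^n: x\ge 0,\ \mathbf 1_n^Tx=1\}$. Let $C\in\mathbb R^{n\times n}$ be a nonnegative row-stochastic matrix with zero diagonal, and $\mathcal G(C)$ the digraph on $\{1,\dots,n\}$ with an edge $(i,j)$ iff $C_{ij}>0$. $\mathcal G(C)$ is a star topology with center node $l$ if every edge of $\mathcal G(C)$ is either from $l$ or to $l$ (i.e. $C_{ij}>0$ implies $i=l$ or $j=l$). Let $\theta=(\theta_1,\dots,\theta_n)\in[0,1]^n$, $\Theta=\mathrm{diag}(\theta)$, $W(x)=\mathrm{diag}(x)+(I_n-\mathrm{diag}(x))C$. Let $\mathcal V_f=\{i:\theta_i=0\}$ and $\mathcal V_p=\{i:\theta_i>0\}$. System (A): $x(s+1)=F(x(s))$, $s=0,1,2,\dots$, $x(0)\in\Delta_n$, where $F(x)=(I_n-\Theta)(I_n-W(x)^T\Theta)^{-1}\mathbf 1_n/n$. *)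

theory Defs
  imports "HOL-Analysis.Analysis"
begin

text \<open>Vectors in R^n are modelled as real^'n with n = CARD('n);
  n x n matrices as real^'n^'n (rows indexed first).\<close>

definition diagm :: "real^'n \<Rightarrow> real^'n^'n" where
  "diagm x = (\<chi> i j. if i = j then x $ i else 0)"

definition ones :: "real^'n" where
  "ones = (\<chi> i. 1)"

definition prob_simplex :: "(real^'n) set" where
  "prob_simplex = {x. (\<forall>i. 0 \<le> x $ i) \<and> (\<Sum>i\<in>UNIV. x $ i) = 1}"

definition admissible_C :: "real^'n^'n \<Rightarrow> bool" where
  "admissible_C C \<longleftrightarrow> (\<forall>i j. 0 \<le> C $ i $ j) \<and> (\<forall>i. (\<Sum>j\<in>UNIV. C $ i $ j) = 1)
     \<and> (\<forall>i. C $ i $ i = 0)"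

text \<open>G(C) is a star topology with center l: every edge (i,j), i.e. C_ij > 0,
  is from l or to l.\<close>
definition star_topology :: "real^'n^'n \<Rightarrow> 'n \<Rightarrow> bool" where
  "star_topology C l \<longleftrightarrow> (\<forall>i j. 0 < C $ i $ j \<longrightarrow> i = l \<or> j = l)"

definition Wm :: "real^'n^'n \<Rightarrow> real^'n \<Rightarrow> real^'n^'n" where
  "Wm C x = diagm x + (mat 1 - diagm x) ** C"

definition Fmap :: "real^'n^'n \<Rightarrow> real^'n \<Rightarrow> real^'n \<Rightarrow> real^'n" where
  "Fmap C \<theta> x = (mat 1 - diagm \<theta>) *v
      (matrix_inv (mat 1 - transpose (Wm C x) ** diagm \<theta>) *v
        ((1 / real CARD('n)) *\<^sub>R ones))"

definition trajectory :: "real^'n^'n \<Rightarrow> real^'n \<Rightarrow> (nat \<Rightarrow> real^'n) \<Rightarrow> bool" where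
  "trajectory C \<theta> x \<longleftrightarrow> x 0 \<in> prob_simplex \<and> (\<forall>s. x (Suc s) = Fmap C \<theta> (x s))"

definition exp_conv :: "(nat \<Rightarrow> 'a::real_normed_vector) \<Rightarrow> 'a \<Rightarrow> bool" where
  "exp_conv f a \<longleftrightarrow> (\<exists>c q. 0 \<le> c \<and> 0 \<le> q \<and> q < 1 \<and> (\<forall>s. norm (f s - a) \<le> c * q ^ s))"

definition limval :: "real \<Rightarrow> real \<Rightarrow> real" where
  "limval n t = (n - sqrt (n^2 - 4 * n * t * (1 - t))) / (2 * n * t)"

definition xi_star :: "real^'n \<Rightarrow> 'n \<Rightarrow> real" where
  "xi_star \<theta> l = (let n = real CARD('n); r = real (card {i. \<theta> $ i = 0}) in
     n - r - n * (\<Sum>j\<in>{j. 0 < \<theta> $ j \<and> j \<noteq> l}. limval n (\<theta> $ j)))"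

definition xstar_l :: "real^'n \<Rightarrow> 'n \<Rightarrow> real" where
  "xstar_l \<theta> l = (let n = real CARD('n) in
     (n - sqrt (n^2 - 4 * n * (\<theta> $ l) * (1 - \<theta> $ l) * xi_star \<theta> l)) / (2 * n * (\<theta> $ l)))"

definition xstar :: "real^'n^'n \<Rightarrow> real^'n \<Rightarrow> 'n \<Rightarrow> real^'n" where
  "xstar C \<theta> l = (\<chi> i. let n = real CARD('n) in
     if i = l then xstar_l \<theta> l
     else if 0 < \<theta> $ i then limval n (\<theta> $ i)
     else 1 / n + (xi_star \<theta> l / n - xstar_l \<theta> l) * C $ l $ i)"

end

theory Submission
  imports Defs
begin

text \<open>The map is \<open>F(x) = (I - \<Theta>) y(x)\<close> where \<open>y = 1/n + W(x)\<^sup>T \<Theta> y\<close>; as \<open>W(x)\<close> is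
  row-stochastic and \<open>\<theta> < 1\<close>, this system has a unique solution, it is nonnegative, and \<open>F\<close>
  maps the simplex into itself. On a star with centre \<open>l\<close>, a peripheral node \<open>i\<close> with
  \<open>C\<^sub>l\<^sub>i = 0\<close> only sees itself: \<open>x\<^sub>i \<mapsto> (1 - \<theta>\<^sub>i) / (n (1 - \<theta>\<^sub>i x\<^sub>i))\<close>, a contraction on
  \<open>[0, 1/n]\<close> whose fixed point is the smaller root of \<open>n \<theta> z\<^sup>2 - n z + 1 - \<theta> = 0\<close>.
  If all peripheral nodes are of this kind, the centre follows
  \<open>x\<^sub>l \<mapsto> (1 - \<theta>\<^sub>l) \<xi>(x) / (n (1 - \<theta>\<^sub>l x\<^sub>l))\<close>, where the inflow \<open>\<xi>\<close> from the periphery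
  converges exponentially; the load bound \<open>\<Sum> \<theta>\<^sub>j \<le> 4n/5 - 1\<close> gives \<open>\<xi> \<le> 4n/5\<close>, hence
  \<open>x\<^sub>l \<le> 4/5\<close> after one step, which makes this a perturbed contraction. The remaining nodes,
  with \<open>\<theta>\<^sub>i = 0\<close>, are explicit functions of \<open>x\<^sub>l\<close>. Every trajectory thus converges
  exponentially to \<open>x\<^sup>*\<close>, which is therefore the only fixed point in the simplex.\<close>

section \<open>Exponential convergence\<close>

lemma exp_convI:
  assumes "0 \<le> c" "0 \<le> q" "q < 1" "\<And>s. norm (f s - a) \<le> c * q ^ s"
  shows "exp_conv f a"
  using assms unfolding exp_conv_def by blast

lemma exp_conv_imp_LIMSEQ:
  assumes "exp_conv f a"
  shows "f \<longlonglongrightarrow> a"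
proof -
  obtain c q where cq: "0 \<le> c" "0 \<le> q" "q < 1" "\<And>s. norm (f s - a) \<le> c * q ^ s"
    using assms unfolding exp_conv_def by blast
  have "(\<lambda>s. c * q ^ s) \<longlonglongrightarrow> 0"
    using cq by (intro tendsto_mult_right_zero LIMSEQ_power_zero) simp
  then have "(\<lambda>s. f s - a) \<longlonglongrightarrow> 0"
    by (rule Lim_null_comparison[rotated]) (use cq(4) in simp)
  then show ?thesis by (rule LIM_zero_cancel)
qed

lemma exp_conv_const: "exp_conv (\<lambda>s. a) a"
  by (rule exp_convI[of 0 0]) auto

lemma exp_conv_dominated:
  assumes g: "exp_conv g b" and K: "0 \<le> K"
    and le: "\<And>s. norm (f s - a) \<le> K * norm (g s - b)"
  shows "exp_conv f a"
proof -
  obtain c q where cq: "0 \<le> c" "0 \<le> q" "q < 1" "\<And>s. norm (g s - b) \<le> c * q ^ s"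
    using g unfolding exp_conv_def by blast
  show ?thesis
  proof (rule exp_convI[of "K * c" q])
    show "norm (f s - a) \<le> K * c * q ^ s" for s
      using le[of s] mult_left_mono[OF cq(4)[of s] K] by simp
  qed (use cq K in auto)
qed

lemma exp_conv_common_rate:
  assumes "exp_conv f a" "exp_conv g b"
  obtains c q where "0 \<le> c" "0 \<le> q" "q < 1"
    "\<And>s. norm (f s - a) \<le> c * q ^ s" "\<And>s. norm (g s - b) \<le> c * q ^ s"
proof -
  obtain c1 q1 where 1: "0 \<le> c1" "0 \<le> q1" "q1 < 1" "\<And>s. norm (f s - a) \<le> c1 * q1 ^ s"
    using assms(1) unfolding exp_conv_def by blast
  obtain c2 q2 where 2: "0 \<le> c2" "0 \<le> q2" "q2 < 1" "\<And>s. norm (g s - b) \<le> c2 * q2 ^ s"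
    using assms(2) unfolding exp_conv_def by blast
  let ?c = "max c1 c2" and ?q = "max q1 q2"
  have "c1 * q1 ^ s \<le> ?c * ?q ^ s" "c2 * q2 ^ s \<le> ?c * ?q ^ s" for s
    using 1 2 by (auto intro!: mult_mono power_mono)
  with 1 2 show ?thesis
    by (intro that[of ?c ?q]) (auto intro: order_trans[OF 1(4)] order_trans[OF 2(4)])
qed

lemma exp_conv_add:
  assumes "exp_conv f a" "exp_conv g b"
  shows "exp_conv (\<lambda>s. f s + g s) (a + b)"
proof -
  obtain c q where cq: "0 \<le> c" "0 \<le> q" "q < 1"
    "\<And>s. norm (f s - a) \<le> c * q ^ s" "\<And>s. norm (g s - b) \<le> c * q ^ s"
    using exp_conv_common_rate[OF assms] by blast
  show ?thesis
  proof (rule exp_convI[of "2 * c" q])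
    show "norm (f s + g s - (a + b)) \<le> 2 * c * q ^ s" for s
      using norm_triangle_ineq[of "f s - a" "g s - b"] cq(4,5)[of s] by (simp add: algebra_simps)
  qed (use cq in auto)
qed

lemma exp_conv_mult:
  fixes f g :: "nat \<Rightarrow> 'a::real_normed_algebra"
  assumes "exp_conv f a" "exp_conv g b"
  shows "exp_conv (\<lambda>s. f s * g s) (a * b)"
proof -
  obtain c q where cq: "0 \<le> c" "0 \<le> q" "q < 1"
    "\<And>s. norm (f s - a) \<le> c * q ^ s" "\<And>s. norm (g s - b) \<le> c * q ^ s"
    using exp_conv_common_rate[OF assms] by blast
  show ?thesis
  proof (rule exp_convI[of "c * (norm b + c) + norm a * c" q])
    fix s
    have "q ^ s \<le> 1" using cq by (simp add: power_le_one)
    then have "norm (g s) \<le> norm b + c"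
      using norm_triangle_ineq[of b "g s - b"] cq(5)[of s] mult_left_le[of "q ^ s" c] cq(1) by simp
    then have "norm ((f s - a) * g s) \<le> c * q ^ s * (norm b + c)"
      using cq(1,2) cq(4)[of s] by (intro order_trans[OF norm_mult_ineq] mult_mono) auto
    moreover have "norm (a * (g s - b)) \<le> norm a * (c * q ^ s)"
      using cq(5)[of s] by (intro order_trans[OF norm_mult_ineq] mult_left_mono) auto
    moreover have "f s * g s - a * b = (f s - a) * g s + a * (g s - b)"
      by (simp add: algebra_simps)
    ultimately show "norm (f s * g s - a * b) \<le> (c * (norm b + c) + norm a * c) * q ^ s"
      using norm_triangle_ineq[of "(f s - a) * g s" "a * (g s - b)"] by (simp add: algebra_simps)
  qed (use cq in auto)
qed

lemma exp_conv_sum: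
  assumes "finite I" "\<And>i. i \<in> I \<Longrightarrow> exp_conv (f i) (a i)"
  shows "exp_conv (\<lambda>s. \<Sum>i\<in>I. f i s) (\<Sum>i\<in>I. a i)"
  using assms by (induction I rule: finite_induct) (auto intro: exp_conv_add exp_conv_const)

lemma exp_conv_vec:
  fixes f :: "nat \<Rightarrow> real^'n"
  assumes "\<And>i. exp_conv (\<lambda>s. f s $ i) (a $ i)"
  shows "exp_conv f a"
proof -
  have "exp_conv (\<lambda>s. \<bar>f s $ i - a $ i\<bar>) 0" for i
    by (rule exp_conv_dominated[OF assms[of i], of 1]) simp_all
  then have "exp_conv (\<lambda>s. \<Sum>i\<in>UNIV. \<bar>f s $ i - a $ i\<bar>) 0"
    using exp_conv_sum[of UNIV "\<lambda>i s. \<bar>f s $ i - a $ i\<bar>" "\<lambda>i. 0"] by simp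
  then show ?thesis
    by (rule exp_conv_dominated[of _ _ 1]) (simp_all add: norm_le_l1_cart[of "f _ - a", simplified])
qed

lemma exp_conv_Suc_iff: "exp_conv (\<lambda>s. f (Suc s)) a \<longleftrightarrow> exp_conv f a"
proof
  assume "exp_conv (\<lambda>s. f (Suc s)) a"
  then obtain c q where cq: "0 \<le> c" "0 \<le> q" "q < 1" "\<And>s. norm (f (Suc s) - a) \<le> c * q ^ s"
    unfolding exp_conv_def by blast
  define r where "r = max q (1/2)"
  have r: "0 < r" "q \<le> r" "r < 1" using cq unfolding r_def by auto
  show "exp_conv f a"
  proof (rule exp_convI[of "max (norm (f 0 - a)) (c / r)" r])
    show "norm (f s - a) \<le> max (norm (f 0 - a)) (c / r) * r ^ s" for s
    proof (cases s)
      case (Suc m)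
      have "norm (f s - a) \<le> c * r ^ m"
        using cq(4)[of m] mult_left_mono[OF power_mono[OF r(2) cq(2)] cq(1)] Suc
        by (meson order_trans)
      also have "\<dots> = c / r * r ^ s" using r Suc by simp
      also have "\<dots> \<le> max (norm (f 0 - a)) (c / r) * r ^ s"
        using r by (intro mult_right_mono) auto
      finally show ?thesis .
    qed simp
  qed (use r cq(1) in \<open>auto simp: le_max_iff_disj\<close>)
next
  assume "exp_conv f a"
  then obtain c q where cq: "0 \<le> c" "0 \<le> q" "q < 1" "\<And>s. norm (f s - a) \<le> c * q ^ s"
    unfolding exp_conv_def by blast
  show "exp_conv (\<lambda>s. f (Suc s)) a"
  proof (rule exp_convI[OF cq(1-3)])
    fix s
    have "c * q ^ Suc s \<le> c * q ^ s"
      using cq by (intro mult_left_mono power_decreasing) auto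
    then show "norm (f (Suc s) - a) \<le> c * q ^ s"
      using cq(4)[of "Suc s"] by linarith
  qed
qed

lemma exp_conv_perturbed_contraction:
  fixes f g :: "nat \<Rightarrow> real"
  assumes g: "exp_conv g b" and q: "0 \<le> q" "q < 1" and K: "0 \<le> K"
    and step: "\<And>s. \<bar>f (Suc s) - a\<bar> \<le> q * \<bar>f s - a\<bar> + K * \<bar>g s - b\<bar>"
  shows "exp_conv f a"
proof -
  obtain c \<rho> where c\<rho>: "0 \<le> c" "0 \<le> \<rho>" "\<rho> < 1" "\<And>s. \<bar>g s - b\<bar> \<le> c * \<rho> ^ s"
    using g unfolding exp_conv_def by auto
  define r where "r = (1 + max q \<rho>) / 2"
  have r: "q < r" "\<rho> \<le> r" "r < 1" using q c\<rho> unfolding r_def by auto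
  define A where "A = \<bar>f 0 - a\<bar> + K * c / (r - q)"
  have A0: "\<bar>f 0 - a\<bar> \<le> A" using K c\<rho>(1) r(1) unfolding A_def by simp
  have "(r - q) * A = (r - q) * \<bar>f 0 - a\<bar> + K * c"
    using r(1) unfolding A_def by (simp add: field_simps)
  moreover have "0 \<le> (r - q) * \<bar>f 0 - a\<bar>" using r(1) by simp
  ultimately have KcA: "q * A + K * c \<le> r * A"
    by (simp add: algebra_simps)
  have "\<bar>f s - a\<bar> \<le> A * r ^ s" for s
  proof (induction s)
    case 0
    show ?case using A0 by simp
  next
    case (Suc s)
    have "c * \<rho> ^ s \<le> c * r ^ s"
      using c\<rho>(1,2) r(2) by (intro mult_left_mono power_mono) auto
    then have "K * \<bar>g s - b\<bar> \<le> K * (c * r ^ s)"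
      using c\<rho>(4)[of s] K by (intro mult_left_mono) auto
    then have "\<bar>f (Suc s) - a\<bar> \<le> q * (A * r ^ s) + K * (c * r ^ s)"
      using step[of s] mult_left_mono[OF Suc.IH q(1)] by linarith
    also have "\<dots> = (q * A + K * c) * r ^ s" by (simp add: algebra_simps)
    also have "\<dots> \<le> (r * A) * r ^ s"
      using KcA r(1) q(1) by (intro mult_right_mono) auto
    finally show ?case by (simp add: mult_ac)
  qed
  moreover have "0 \<le> A" using A0 by linarith
  ultimately show ?thesis
    using r q by (intro exp_convI[of A r]) auto
qed

lemma exp_conv_contraction:
  fixes f :: "nat \<Rightarrow> real"
  assumes "0 \<le> q" "q < 1" "\<And>s. \<bar>f (Suc s) - a\<bar> \<le> q * \<bar>f s - a\<bar>"
  shows "exp_conv f a"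
  using assms by (intro exp_conv_perturbed_contraction[OF exp_conv_const, of q 0]) auto

section \<open>Scalar estimates\<close>

lemma inverse_affine_fixed_point_diff:
  fixes c t a w :: real
  assumes "1 - t * a \<noteq> 0" "w * (1 - t * w) = c"
  shows "c / (1 - t * a) - w = t * w / (1 - t * a) * (a - w)"
  using assms by (auto simp: field_simps)

lemma smaller_root:
  fixes n t k :: real
  assumes n: "0 < n" and t: "0 < t" and k: "0 \<le> k" and disc: "4 * t * k \<le> n"
  defines "z \<equiv> (n - sqrt (n\<^sup>2 - 4 * n * t * k)) / (2 * n * t)"
  shows "0 \<le> z" "t * z \<le> 1/2" "z * (1 - t * z) = k / n"
proof -
  define S where "S = sqrt (n\<^sup>2 - 4 * n * t * k)"
  have "n * (4 * t * k) \<le> n * n" using disc n by (intro mult_left_mono) auto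
  then have D: "0 \<le> n\<^sup>2 - 4 * n * t * k" by (simp add: power2_eq_square mult_ac)
  have S2: "S\<^sup>2 = n\<^sup>2 - 4 * n * t * k" and S0: "0 \<le> S" unfolding S_def using D by simp_all
  have "0 \<le> 4 * n * t * k" using n t k by simp
  then have "S\<^sup>2 \<le> n\<^sup>2" using S2 by linarith
  then have Sn: "S \<le> n" by (rule power2_le_imp_le) (use n in simp)
  have z: "z = (n - S) / (2 * n * t)" unfolding z_def S_def ..
  show "0 \<le> z" unfolding z using Sn n t by simp
  have tz: "t * z = (n - S) / (2 * n)" unfolding z using t by simp
  show "t * z \<le> 1/2" unfolding tz using S0 n by simp
  have "1 - t * z = (n + S) / (2 * n)" unfolding tz using n by (simp add: field_simps)
  then have "z * (1 - t * z) = ((n - S) * (n + S)) / ((2 * n * t) * (2 * n))"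
    unfolding z by (simp only: times_divide_times_eq)
  also have "(n - S) * (n + S) = 4 * n * t * k" using S2 by (simp add: algebra_simps power2_eq_square)
  also have "4 * n * t * k / ((2 * n * t) * (2 * n)) = k / n" using n t by simp
  finally show "z * (1 - t * z) = k / n" .
qed

lemma four_mult_one_minus_le_1: "4 * t * (1 - t) \<le> (1::real)"
proof -
  have "4 * t * (1 - t) = 1 - (2 * t - 1)\<^sup>2" by (simp add: power2_eq_square algebra_simps)
  then show ?thesis by simp
qed

lemma limval_props:
  fixes n t :: real
  assumes n: "2 \<le> n" and t: "0 < t" "t < 1"
  shows "0 \<le> limval n t" "limval n t \<le> 1 / n"
    "limval n t * (1 - t * limval n t) = (1 - t) / n" "t * limval n t \<le> 1 / 2"
proof -
  define z where "z = limval n t"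
  have "4 * t * (1 - t) \<le> n" using n four_mult_one_minus_le_1[of t] by linarith
  then have z0: "0 \<le> z" and tz: "t * z \<le> 1/2" and zq: "z * (1 - t * z) = (1 - t) / n"
    using smaller_root[of n t "1 - t"] n t unfolding z_def limval_def by auto
  show "0 \<le> limval n t" "limval n t * (1 - t * limval n t) = (1 - t) / n"
    "t * limval n t \<le> 1 / 2"
    using z0 zq tz unfolding z_def by auto
  show "limval n t \<le> 1 / n"
  proof (rule ccontr)
    assume "\<not> limval n t \<le> 1 / n"
    then have "0 < z - 1 / n" unfolding z_def by simp
    moreover have "t / n < 1 / 2" using n t by (simp add: divide_less_eq)
    moreover have "t * (z + 1 / n) = t * z + t / n" by (simp add: algebra_simps)
    ultimately have "0 < 1 - t * (z + 1 / n)" using tz by linarith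
    with \<open>0 < z - 1 / n\<close> have "0 < (z - 1 / n) * (1 - t * (z + 1 / n))" by simp
    also have "\<dots> = z * (1 - t * z) - (1 - t / n) / n" using n by (simp add: field_simps)
    also have "\<dots> = (1 - t) / n - (1 - t / n) / n" using zq by simp
    also have "\<dots> = - (t * (1 - 1 / n) / n)" using n by (simp add: field_simps)
    also have "\<dots> \<le> 0" using n t by simp
    finally show False by simp
  qed
qed

text \<open>For a peripheral node \<open>j\<close> with \<open>C\<^sub>l\<^sub>j = 0\<close>, its term \<open>(1 - x\<^sub>j) \<theta>\<^sub>j y\<^sub>j\<close> in the
  centre's row of \<open>y = 1/n + W(x)\<^sup>T \<Theta> y\<close> is \<open>peripheral_flow \<theta>\<^sub>j x\<^sub>j / n\<close>.\<close>
definition peripheral_flow :: "real \<Rightarrow> real \<Rightarrow> real" where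
  "peripheral_flow t s = t * (1 - s) / (1 - t * s)"

lemma peripheral_flow_bounds:
  fixes t s :: real
  assumes "0 \<le> t" "t < 1" "0 \<le> s" "s \<le> 1"
  shows "0 \<le> peripheral_flow t s" "peripheral_flow t s \<le> t"
proof -
  have "t * s \<le> t" "t * s \<le> s"
    using assms mult_left_le[of s t] mult_left_le_one_le[of s t] by auto
  then have "0 < 1 - t * s" "t * (1 - s) \<le> t * (1 - t * s)"
    using assms by (auto intro!: mult_left_mono)
  then show "0 \<le> peripheral_flow t s" "peripheral_flow t s \<le> t"
    unfolding peripheral_flow_def using assms by (auto simp: divide_le_eq)
qed

lemma peripheral_flow_lipschitz:
  fixes t a b :: real
  assumes t: "0 \<le> t" "t < 1" and a: "0 \<le> a" "a \<le> 1" and b: "0 \<le> b" "b \<le> 1"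
  shows "\<bar>peripheral_flow t a - peripheral_flow t b\<bar> \<le> t / (1 - t) * \<bar>a - b\<bar>"
proof -
  have ta: "1 - t \<le> 1 - t * a" and tb: "1 - t \<le> 1 - t * b"
    using t a b mult_left_le[of a t] mult_left_le[of b t] by auto
  have "peripheral_flow t a - peripheral_flow t b = t * (1 - t) * (b - a) / ((1 - t * a) * (1 - t * b))"
    using ta tb t unfolding peripheral_flow_def by (simp add: field_simps)
  then have "\<bar>peripheral_flow t a - peripheral_flow t b\<bar>
      = t * (1 - t) * \<bar>a - b\<bar> / ((1 - t * a) * (1 - t * b))"
    using ta tb t by (simp add: abs_mult abs_minus_commute)
  also have "\<dots> \<le> t * (1 - t) * \<bar>a - b\<bar> / ((1 - t) * (1 - t))"
    using ta tb t by (intro divide_left_mono mult_mono) auto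
  also have "\<dots> = t / (1 - t) * \<bar>a - b\<bar>" using t by simp
  finally show ?thesis .
qed

lemma peripheral_flow_limval:
  fixes n t :: real
  assumes "2 \<le> n" "0 < t" "t < 1"
  shows "peripheral_flow t (limval n t) = 1 - n * limval n t"
proof -
  note z = limval_props[OF assms]
  have "1 - t * limval n t \<noteq> 0" using z(4) by simp
  then show ?thesis
    using z(3) assms unfolding peripheral_flow_def by (simp add: field_simps)
qed

lemma peripheral_step_bound:
  fixes n t a z :: real
  assumes n: "2 \<le> n" and t: "0 \<le> t" "t < 1" and a: "0 \<le> a" "a \<le> 1 / n"
    and z: "0 \<le> z" "z \<le> 1 / n" "z * (1 - t * z) = (1 - t) / n"
  shows "\<bar>(1 - t) / n / (1 - t * a) - z\<bar> \<le> t / (n - t) * \<bar>a - z\<bar>"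
proof -
  have "t * a \<le> t * (1 / n)" "t * z \<le> t * (1 / n)"
    using mult_left_mono[OF a(2) t(1)] mult_left_mono[OF z(2) t(1)] by auto
  moreover have "t / n < 1" using n t by (simp add: divide_less_eq)
  ultimately have ta: "0 < 1 - t / n" "1 - t / n \<le> 1 - t * a" "t * z \<le> t / n" by auto
  have "(1 - t) / n / (1 - t * a) - z = t * z / (1 - t * a) * (a - z)"
    using ta z(3) by (intro inverse_affine_fixed_point_diff) auto
  then have "\<bar>(1 - t) / n / (1 - t * a) - z\<bar> = t * z / (1 - t * a) * \<bar>a - z\<bar>"
    using ta t z by (simp add: abs_mult)
  also have "\<dots> \<le> (t / n) / (1 - t / n) * \<bar>a - z\<bar>"
    using ta t z n by (intro mult_right_mono frac_le) auto
  also have "(t / n) / (1 - t / n) = t / (n - t)" using n by (simp add: field_simps)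
  finally show ?thesis .
qed

lemma center_root_margin:
  fixes t u :: real
  assumes t: "0 < t" and u: "u \<le> 1 / 2" and uu: "u * (1 - u) \<le> 4 * t * (1 - t) / 5"
  shows "u < 1 - 4 * t / 5"
proof (rule ccontr)
  define v where "v = 1 - 4 * t / 5"
  assume "\<not> u < 1 - 4 * t / 5"
  then have "0 \<le> (u - v) * (1 - u - v)" using u unfolding v_def by simp
  then have "v * (1 - v) \<le> u * (1 - u)" by (simp add: algebra_simps)
  moreover have "v * (1 - v) = 4 * t * (1 - t) / 5 + 4 * t\<^sup>2 / 25"
    unfolding v_def by (simp add: field_simps power2_eq_square)
  moreover have "0 < t\<^sup>2" using t by simp
  ultimately show False using uu by linarith
qed

lemma center_step_bound:
  fixes n t a w X Y :: real
  assumes n: "0 < n" and t: "0 < t" "t < 1" and a: "0 \<le> a" "a \<le> 4 / 5"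
    and w: "0 \<le> w" "w * (1 - t * w) = (1 - t) * X / n"
  shows "\<bar>(1 - t) * Y / n / (1 - t * a) - w\<bar> \<le> t * w / (1 - 4 * t / 5) * \<bar>a - w\<bar> + \<bar>Y - X\<bar> / n"
proof -
  have "t * a \<le> t * (4 / 5)" using a t by (intro mult_left_mono) auto
  then have ta: "0 < 1 - 4 * t / 5" "1 - 4 * t / 5 \<le> 1 - t * a" "1 - t \<le> 1 - t * a" using t by auto
  have "(1 - t) * Y / n / (1 - t * a) - w
      = (1 - t) / (1 - t * a) * ((Y - X) / n) + ((1 - t) * X / n / (1 - t * a) - w)"
    by (simp add: algebra_simps diff_divide_distrib)
  also have "(1 - t) * X / n / (1 - t * a) - w = t * w / (1 - t * a) * (a - w)"
    using ta w(2) by (intro inverse_affine_fixed_point_diff) auto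
  finally have split: "(1 - t) * Y / n / (1 - t * a) - w
      = (1 - t) / (1 - t * a) * ((Y - X) / n) + t * w / (1 - t * a) * (a - w)" .
  have pa: "0 < 1 - t * a" using ta(1,2) by linarith
  have k0: "0 \<le> (1 - t) / (1 - t * a)" using pa t by simp
  have k1: "(1 - t) / (1 - t * a) \<le> 1" using divide_le_eq_1_pos[OF pa] ta(3) by simp
  have "\<bar>(1 - t) / (1 - t * a) * ((Y - X) / n)\<bar> = (1 - t) / (1 - t * a) * (\<bar>Y - X\<bar> / n)"
    unfolding abs_mult abs_of_nonneg[OF k0] using n by simp
  also have "\<dots> \<le> \<bar>Y - X\<bar> / n" using k0 k1 n by (intro mult_left_le_one_le) auto
  finally have "\<bar>(1 - t) / (1 - t * a) * ((Y - X) / n)\<bar> \<le> \<bar>Y - X\<bar> / n" .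
  moreover have "0 \<le> t * w / (1 - t * a)" using pa t w by simp
  then have "\<bar>t * w / (1 - t * a) * (a - w)\<bar> \<le> t * w / (1 - 4 * t / 5) * \<bar>a - w\<bar>"
    unfolding abs_mult abs_of_nonneg[OF \<open>0 \<le> t * w / (1 - t * a)\<close>]
    using ta t w by (intro mult_right_mono frac_le) auto
  ultimately show ?thesis
    unfolding split
    using abs_triangle_ineq[of "(1 - t) / (1 - t * a) * ((Y - X) / n)" "t * w / (1 - t * a) * (a - w)"]
    by linarith
qed

section \<open>Resolvents of row-stochastic matrices\<close>

definition row_stochastic :: "real^'n^'n \<Rightarrow> bool" where
  "row_stochastic P \<longleftrightarrow> (\<forall>i j. 0 \<le> P $ i $ j) \<and> (\<forall>i. (\<Sum>j\<in>UNIV. P $ i $ j) = 1)"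

lemma I_minus_transpose_diagm_mult_nth:
  fixes P :: "real^'n^'n" and \<theta> v :: "real^'n"
  shows "((mat 1 - transpose P ** diagm \<theta>) *v v) $ i = v $ i - (\<Sum>j\<in>UNIV. P $ j $ i * \<theta> $ j * v $ j)"
proof -
  have "(\<Sum>k\<in>UNIV. P $ k $ i * (if k = j then \<theta> $ k else 0)) = P $ j $ i * \<theta> $ j" for j
  proof -
    have "(\<Sum>k\<in>UNIV. P $ k $ i * (if k = j then \<theta> $ k else 0))
        = (\<Sum>k\<in>UNIV. if k = j then P $ j $ i * \<theta> $ j else 0)" by (rule sum.cong) auto
    then show ?thesis by simp
  qed
  moreover have "(\<Sum>j\<in>UNIV. v $ j * (if i = j then 1 else 0)) = v $ i"
  proof -
    have "(\<Sum>j\<in>UNIV. v $ j * (if i = j then 1 else 0)) = (\<Sum>j\<in>UNIV. if i = j then v $ i else 0)"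
      by (rule sum.cong) auto
    then show ?thesis by simp
  qed
  ultimately show ?thesis
    by (simp add: matrix_vector_mult_def matrix_matrix_mult_def diagm_def mat_def transpose_def
        algebra_simps sum_subtractf)
qed

lemma I_minus_diagm_mult_nth:
  fixes \<theta> v :: "real^'n"
  shows "((mat 1 - diagm \<theta>) *v v) $ i = (1 - \<theta> $ i) * v $ i"
proof -
  have "(\<Sum>j\<in>UNIV. ((if i = j then 1 else 0) - (if i = j then \<theta> $ i else 0)) * v $ j)
      = (\<Sum>j\<in>UNIV. if i = j then (1 - \<theta> $ i) * v $ i else 0)"
    by (rule sum.cong) auto
  then show ?thesis by (simp add: matrix_vector_mult_def diagm_def mat_def)
qed

text \<open>Summing the inequalities over \<open>i\<close> and using the row sums of \<open>P\<close> gives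
  \<open>\<Sum>j. (1 - \<theta>\<^sub>j) u\<^sub>j \<le> 0\<close>.\<close>
lemma row_stochastic_subinvariant_eq_0:
  fixes P :: "real^'n^'n" and \<theta> :: "real^'n" and u :: "'n \<Rightarrow> real"
  assumes P: "row_stochastic P" and \<theta>: "\<forall>j. 0 \<le> \<theta> $ j \<and> \<theta> $ j < 1"
    and u: "\<forall>j. 0 \<le> u j" and sub: "\<forall>i. u i \<le> (\<Sum>j\<in>UNIV. P $ j $ i * \<theta> $ j * u j)"
  shows "u i = 0"
proof -
  have "(\<Sum>i\<in>UNIV. u i) \<le> (\<Sum>i\<in>UNIV. \<Sum>j\<in>UNIV. P $ j $ i * \<theta> $ j * u j)"
    using sub by (simp add: sum_mono)
  also have "\<dots> = (\<Sum>j\<in>UNIV. \<theta> $ j * u j * (\<Sum>i\<in>UNIV. P $ j $ i))"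
    by (subst sum.swap) (simp add: sum_distrib_left mult_ac)
  also have "\<dots> = (\<Sum>j\<in>UNIV. \<theta> $ j * u j)"
    using P unfolding row_stochastic_def by simp
  finally have "(\<Sum>j\<in>UNIV. (1 - \<theta> $ j) * u j) \<le> 0"
    by (simp add: algebra_simps sum_subtractf)
  moreover have nonneg: "\<forall>j\<in>UNIV. 0 \<le> (1 - \<theta> $ j) * u j" using \<theta> u by (simp add: less_imp_le)
  ultimately have "(\<Sum>j\<in>UNIV. (1 - \<theta> $ j) * u j) = 0"
    by (meson order_antisym sum_nonneg)
  then have "(1 - \<theta> $ i) * u i = 0"
    using sum_nonneg_eq_0_iff[of UNIV "\<lambda>j. (1 - \<theta> $ j) * u j"] nonneg by simp
  moreover have "1 - \<theta> $ i \<noteq> 0" using \<theta> by (metis less_irrefl eq_iff_diff_eq_0)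
  ultimately show ?thesis by simp
qed

lemma invertible_I_minus_transpose_diagm:
  fixes P :: "real^'n^'n" and \<theta> :: "real^'n"
  assumes P: "row_stochastic P" and \<theta>: "\<forall>j. 0 \<le> \<theta> $ j \<and> \<theta> $ j < 1"
  shows "invertible (mat 1 - transpose P ** diagm \<theta>)"
proof -
  have "v = 0" if v: "(mat 1 - transpose P ** diagm \<theta>) *v v = 0" for v :: "real^'n"
  proof -
    have "\<bar>v $ i\<bar> \<le> (\<Sum>j\<in>UNIV. P $ j $ i * \<theta> $ j * \<bar>v $ j\<bar>)" for i
    proof -
      have "v $ i = (\<Sum>j\<in>UNIV. P $ j $ i * \<theta> $ j * v $ j)"
        using arg_cong[OF v, of "\<lambda>w. w $ i"] by (simp add: I_minus_transpose_diagm_mult_nth)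
      then have "\<bar>v $ i\<bar> \<le> (\<Sum>j\<in>UNIV. \<bar>P $ j $ i * \<theta> $ j * v $ j\<bar>)"
        by (simp add: sum_abs)
      also have "\<dots> = (\<Sum>j\<in>UNIV. P $ j $ i * \<theta> $ j * \<bar>v $ j\<bar>)"
        using P \<theta> unfolding row_stochastic_def by (intro sum.cong) (auto simp: abs_mult)
      finally show ?thesis .
    qed
    then have "\<bar>v $ i\<bar> = 0" for i
      by (intro row_stochastic_subinvariant_eq_0[OF P \<theta>, of "\<lambda>i. \<bar>v $ i\<bar>"]) auto
    then show "v = 0" by (simp add: vec_eq_iff)
  qed
  then have "\<exists>B. B ** (mat 1 - transpose P ** diagm \<theta>) = mat 1"
    by (intro matrix_left_invertible_ker[THEN iffD2]) blast
  then show ?thesis by (simp only: invertible_left_inverse)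
qed

lemma invertible_mult_matrix_inv:
  fixes A :: "real^'n^'n"
  assumes "invertible A"
  shows "A *v (matrix_inv A *v b) = b"
proof -
  have "A ** matrix_inv A = mat 1"
    using assms unfolding invertible_def matrix_inv_def by (rule someI2_ex) blast
  then show ?thesis by (simp add: matrix_vector_mul_assoc)
qed

lemma inv_I_minus_transpose_diagm_eq:
  fixes P :: "real^'n^'n" and \<theta> b :: "real^'n"
  assumes P: "row_stochastic P" and \<theta>: "\<forall>j. 0 \<le> \<theta> $ j \<and> \<theta> $ j < 1"
  defines "y \<equiv> matrix_inv (mat 1 - transpose P ** diagm \<theta>) *v b"
  shows "y $ i = b $ i + (\<Sum>j\<in>UNIV. P $ j $ i * \<theta> $ j * y $ j)"
  using arg_cong[OF invertible_mult_matrix_inv[OF invertible_I_minus_transpose_diagm[OF P \<theta>]],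
      of "\<lambda>w. w $ i" b]
  unfolding y_def I_minus_transpose_diagm_mult_nth by simp

text \<open>The negative part of \<open>y\<close> is subinvariant, hence zero.\<close>
lemma inv_I_minus_transpose_diagm_nonneg:
  fixes P :: "real^'n^'n" and \<theta> b :: "real^'n"
  assumes P: "row_stochastic P" and \<theta>: "\<forall>j. 0 \<le> \<theta> $ j \<and> \<theta> $ j < 1" and b: "\<forall>j. 0 \<le> b $ j"
  shows "0 \<le> (matrix_inv (mat 1 - transpose P ** diagm \<theta>) *v b) $ i"
proof -
  define y where "y = matrix_inv (mat 1 - transpose P ** diagm \<theta>) *v b"
  define u where "u j = max 0 (- y $ j)" for j
  have wt: "0 \<le> P $ j $ i * \<theta> $ j" for i j
    using P \<theta> unfolding row_stochastic_def by simp
  have "u i \<le> (\<Sum>j\<in>UNIV. P $ j $ i * \<theta> $ j * u j)" for i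
  proof -
    have "P $ j $ i * \<theta> $ j * (- u j) \<le> P $ j $ i * \<theta> $ j * y $ j" for j
      using wt by (intro mult_left_mono) (auto simp: u_def)
    then have "(\<Sum>j\<in>UNIV. P $ j $ i * \<theta> $ j * (- u j)) \<le> (\<Sum>j\<in>UNIV. P $ j $ i * \<theta> $ j * y $ j)"
      by (rule sum_mono)
    then have "- (\<Sum>j\<in>UNIV. P $ j $ i * \<theta> $ j * u j) \<le> (\<Sum>j\<in>UNIV. P $ j $ i * \<theta> $ j * y $ j)"
      by (simp add: sum_negf)
    then have "- y $ i \<le> (\<Sum>j\<in>UNIV. P $ j $ i * \<theta> $ j * u j)"
      using inv_I_minus_transpose_diagm_eq[OF P \<theta>, of b i, folded y_def] b[rule_format, of i] by linarith
    moreover have "0 \<le> (\<Sum>j\<in>UNIV. P $ j $ i * \<theta> $ j * u j)"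
      using wt by (auto intro!: sum_nonneg simp: u_def)
    ultimately show ?thesis by (simp add: u_def)
  qed
  then have "u i = 0"
    by (intro row_stochastic_subinvariant_eq_0[OF P \<theta>]) (auto simp: u_def)
  then show ?thesis by (simp add: u_def y_def)
qed

section \<open>The map \<open>F\<close>\<close>

lemma Wm_nth: "Wm C x $ j $ i = (if j = i then x $ j else 0) + (1 - x $ j) * C $ j $ i"
proof -
  have "(\<Sum>k\<in>UNIV. ((if j = k then 1 else 0) - (if j = k then x $ j else 0)) * C $ k $ i)
      = (\<Sum>k\<in>UNIV. if j = k then (1 - x $ j) * C $ j $ i else 0)"
    by (rule sum.cong) auto
  then show ?thesis
    unfolding Wm_def diagm_def matrix_matrix_mult_def mat_def by simp
qed

lemma row_stochastic_Wm:
  assumes C: "admissible_C C" and x: "\<forall>i. 0 \<le> x $ i \<and> x $ i \<le> 1"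
  shows "row_stochastic (Wm C x)"
proof -
  have "(\<Sum>i\<in>UNIV. Wm C x $ j $ i) = x $ j + (1 - x $ j) * (\<Sum>i\<in>UNIV. C $ j $ i)" for j
    by (simp add: Wm_nth sum.distrib sum_distrib_left)
  then show ?thesis
    using C x unfolding row_stochastic_def admissible_C_def by (simp add: Wm_nth)
qed

lemma prob_simplex_nth:
  assumes "x \<in> prob_simplex"
  shows "0 \<le> x $ i" "x $ i \<le> 1"
proof -
  have nonneg: "\<forall>j\<in>UNIV. 0 \<le> x $ j" and sum: "(\<Sum>j\<in>UNIV. x $ j) = 1"
    using assms unfolding prob_simplex_def by auto
  show "0 \<le> x $ i" using nonneg by simp
  show "x $ i \<le> 1" using member_le_sum[of i UNIV "\<lambda>j. x $ j"] nonneg sum by simp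
qed

definition resolvent :: "real^'n^'n \<Rightarrow> real^'n \<Rightarrow> real^'n \<Rightarrow> real^'n" where
  "resolvent C \<theta> x =
    matrix_inv (mat 1 - transpose (Wm C x) ** diagm \<theta>) *v ((1 / real CARD('n)) *\<^sub>R ones)"

lemma Fmap_nth: "Fmap C \<theta> x $ i = (1 - \<theta> $ i) * resolvent C \<theta> x $ i"
  unfolding Fmap_def resolvent_def I_minus_diagm_mult_nth ..

context
  fixes C :: "real^'n^'n" and \<theta> x :: "real^'n"
  assumes C: "admissible_C C" and \<theta>: "\<forall>i. 0 \<le> \<theta> $ i \<and> \<theta> $ i < 1" and x: "x \<in> prob_simplex"
begin

lemma row_stochastic_Wm_simplex: "row_stochastic (Wm C x)"
  using row_stochastic_Wm[OF C] prob_simplex_nth[OF x] by blast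

lemma resolvent_eq:
  "resolvent C \<theta> x $ i = 1 / real CARD('n) + (\<Sum>j\<in>UNIV. Wm C x $ j $ i * \<theta> $ j * resolvent C \<theta> x $ j)"
proof -
  have "resolvent C \<theta> x $ i = ((1 / real CARD('n)) *\<^sub>R ones) $ i
      + (\<Sum>j\<in>UNIV. Wm C x $ j $ i * \<theta> $ j * resolvent C \<theta> x $ j)"
    unfolding resolvent_def by (rule inv_I_minus_transpose_diagm_eq[OF row_stochastic_Wm_simplex \<theta>])
  moreover have "((1 / real CARD('n)) *\<^sub>R ones) $ i = 1 / real CARD('n)" by (simp add: ones_def)
  ultimately show ?thesis by linarith
qed

lemma resolvent_nonneg: "0 \<le> resolvent C \<theta> x $ i"
  unfolding resolvent_def
  by (rule inv_I_minus_transpose_diagm_nonneg[OF row_stochastic_Wm_simplex \<theta>]) (simp add: ones_def)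

text \<open>Each column sum of \<open>W(x)\<^sup>T\<Theta>\<close> is \<open>\<theta>\<^sub>j\<close>, so \<open>\<Sum>\<^sub>i y\<^sub>i = 1 + \<Sum>\<^sub>j \<theta>\<^sub>j y\<^sub>j\<close>.\<close>
lemma Fmap_prob_simplex: "Fmap C \<theta> x \<in> prob_simplex"
proof -
  let ?y = "resolvent C \<theta> x"
  have "(\<Sum>i\<in>UNIV. ?y $ i) = (\<Sum>i\<in>UNIV. 1 / real CARD('n) + (\<Sum>j\<in>UNIV. Wm C x $ j $ i * \<theta> $ j * ?y $ j))"
    by (intro sum.cong refl resolvent_eq)
  also have "\<dots> = 1 + (\<Sum>i\<in>UNIV. \<Sum>j\<in>UNIV. Wm C x $ j $ i * \<theta> $ j * ?y $ j)"
    by (simp add: sum.distrib)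
  also have "\<dots> = 1 + (\<Sum>j\<in>UNIV. \<theta> $ j * ?y $ j * (\<Sum>i\<in>UNIV. Wm C x $ j $ i))"
    by (subst sum.swap) (simp add: sum_distrib_left mult_ac)
  also have "\<dots> = 1 + (\<Sum>j\<in>UNIV. \<theta> $ j * ?y $ j)"
    using row_stochastic_Wm_simplex unfolding row_stochastic_def by simp
  finally have "(\<Sum>i\<in>UNIV. Fmap C \<theta> x $ i) = 1"
    by (simp add: Fmap_nth algebra_simps sum_subtractf)
  moreover have "0 \<le> Fmap C \<theta> x $ i" for i
    unfolding Fmap_nth using resolvent_nonneg \<theta> by (simp add: less_imp_le)
  ultimately show ?thesis unfolding prob_simplex_def by blast
qed

end

lemma trajectory_prob_simplex:
  assumes C: "admissible_C C" and \<theta>: "\<forall>i. 0 \<le> \<theta> $ i \<and> \<theta> $ i < 1" and x: "trajectory C \<theta> x"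
  shows "x s \<in> prob_simplex"
proof (induction s)
  case 0
  show ?case using x unfolding trajectory_def by blast
next
  case (Suc s)
  have "x (Suc s) = Fmap C \<theta> (x s)" using x unfolding trajectory_def by blast
  then show ?case using Fmap_prob_simplex[OF C \<theta> Suc.IH] by simp
qed

section \<open>Star topologies\<close>

locale star_network =
  fixes C :: "real^'n^'n" and \<theta> :: "real^'n" and l :: 'n
  assumes card_ge_2: "CARD('n) \<ge> 2"
    and admissible: "admissible_C C"
    and theta_range: "\<forall>i. 0 \<le> \<theta> $ i \<and> \<theta> $ i < 1"
    and star: "star_topology C l"
    and theta_center_pos: "0 < \<theta> $ l"
begin

abbreviation periphery :: "'n set" where
  "periphery \<equiv> {j. 0 < \<theta> $ j \<and> j \<noteq> l}"

lemma real_card_ge_2: "2 \<le> real CARD('n)"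
  using card_ge_2 by simp

lemma C_nonneg: "0 \<le> C $ i $ j"
  using admissible unfolding admissible_C_def by simp

lemma C_off_center: "i \<noteq> l \<Longrightarrow> j \<noteq> l \<Longrightarrow> C $ i $ j = 0"
  using star C_nonneg[of i j] unfolding star_topology_def by force

lemma C_to_center:
  assumes "i \<noteq> l"
  shows "C $ i $ l = 1"
proof -
  have "(\<Sum>j\<in>UNIV. C $ i $ j) = (\<Sum>j\<in>UNIV. if j = l then C $ i $ l else 0)"
    using C_off_center[OF assms] by (intro sum.cong) auto
  then show ?thesis using admissible unfolding admissible_C_def by simp
qed

lemma theta_simplex_factor:
  assumes x: "x \<in> prob_simplex"
  shows "0 < 1 - \<theta> $ i * x $ i" "0 \<le> (1 - \<theta> $ i) / (1 - \<theta> $ i * x $ i)"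
    "(1 - \<theta> $ i) / (1 - \<theta> $ i * x $ i) \<le> 1"
proof -
  have le: "\<theta> $ i * x $ i \<le> \<theta> $ i"
    using theta_range prob_simplex_nth[OF x, of i] mult_left_le[of "x $ i" "\<theta> $ i"] by simp
  then show pos: "0 < 1 - \<theta> $ i * x $ i" using theta_range[rule_format, of i] by linarith
  then show "0 \<le> (1 - \<theta> $ i) / (1 - \<theta> $ i * x $ i)" using theta_range[rule_format, of i] by simp
  show "(1 - \<theta> $ i) / (1 - \<theta> $ i * x $ i) \<le> 1"
    unfolding divide_le_eq_1_pos[OF pos] using le by linarith
qed

lemma resolvent_noncenter:
  assumes x: "x \<in> prob_simplex" and i: "i \<noteq> l"
  shows "resolvent C \<theta> x $ i = 1 / real CARD('n) + x $ i * \<theta> $ i * resolvent C \<theta> x $ i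
    + (1 - x $ l) * C $ l $ i * \<theta> $ l * resolvent C \<theta> x $ l"
proof -
  let ?y = "resolvent C \<theta> x"
  have "Wm C x $ j $ i * \<theta> $ j * ?y $ j
      = (if j = i then x $ i * \<theta> $ i * ?y $ i else 0)
        + (if j = l then (1 - x $ l) * C $ l $ i * \<theta> $ l * ?y $ l else 0)" for j
    using i admissible C_off_center[of j i] unfolding admissible_C_def by (auto simp: Wm_nth)
  then have "(\<Sum>j\<in>UNIV. Wm C x $ j $ i * \<theta> $ j * ?y $ j)
      = x $ i * \<theta> $ i * ?y $ i + (1 - x $ l) * C $ l $ i * \<theta> $ l * ?y $ l"
    by (simp add: sum.distrib)
  then show ?thesis using resolvent_eq[OF admissible theta_range x, of i] by linarith
qed

lemma resolvent_center:
  assumes x: "x \<in> prob_simplex"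
  shows "resolvent C \<theta> x $ l = 1 / real CARD('n) + x $ l * \<theta> $ l * resolvent C \<theta> x $ l
    + (\<Sum>j\<in>periphery. (1 - x $ j) * \<theta> $ j * resolvent C \<theta> x $ j)"
proof -
  let ?y = "resolvent C \<theta> x"
  have "Wm C x $ j $ l * \<theta> $ j * ?y $ j
      = (if j = l then x $ l * \<theta> $ l * ?y $ l else 0)
        + (if j \<in> periphery then (1 - x $ j) * \<theta> $ j * ?y $ j else 0)" for j
    using admissible C_to_center[of j] theta_range[rule_format, of j]
    unfolding admissible_C_def by (auto simp: Wm_nth)
  then have "(\<Sum>j\<in>UNIV. Wm C x $ j $ l * \<theta> $ j * ?y $ j)
      = x $ l * \<theta> $ l * ?y $ l
        + (\<Sum>j\<in>UNIV. if j \<in> periphery then (1 - x $ j) * \<theta> $ j * ?y $ j else 0)"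
    by (simp only: sum.distrib) simp
  also have "(\<Sum>j\<in>UNIV. if j \<in> periphery then (1 - x $ j) * \<theta> $ j * ?y $ j else 0)
      = (\<Sum>j\<in>periphery. (1 - x $ j) * \<theta> $ j * ?y $ j)"
    by (subst sum.inter_restrict[symmetric]) auto
  finally have "(\<Sum>j\<in>UNIV. Wm C x $ j $ l * \<theta> $ j * ?y $ j)
      = x $ l * \<theta> $ l * ?y $ l + (\<Sum>j\<in>periphery. (1 - x $ j) * \<theta> $ j * ?y $ j)" .
  then show ?thesis using resolvent_eq[OF admissible theta_range x, of l] by linarith
qed

lemma resolvent_peripheral:
  assumes x: "x \<in> prob_simplex" and i: "i \<noteq> l" "C $ l $ i = 0"
  shows "resolvent C \<theta> x $ i = 1 / real CARD('n) / (1 - \<theta> $ i * x $ i)"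
proof -
  have "0 < 1 - \<theta> $ i * x $ i" by (rule theta_simplex_factor(1)[OF x])
  moreover have "resolvent C \<theta> x $ i * (1 - \<theta> $ i * x $ i) = 1 / real CARD('n)"
    using resolvent_noncenter[OF x i(1)] i(2) by (simp add: algebra_simps)
  ultimately show ?thesis by (simp add: field_simps)
qed

lemma Fmap_peripheral:
  assumes "x \<in> prob_simplex" "i \<noteq> l" "C $ l $ i = 0"
  shows "Fmap C \<theta> x $ i = (1 - \<theta> $ i) / real CARD('n) / (1 - \<theta> $ i * x $ i)"
  unfolding Fmap_nth resolvent_peripheral[OF assms] by simp

lemma Fmap_follower:
  assumes x: "x \<in> prob_simplex" and i: "\<theta> $ i = 0"
  shows "Fmap C \<theta> x $ i
    = 1 / real CARD('n) + (1 - x $ l) * C $ l $ i * \<theta> $ l * Fmap C \<theta> x $ l / (1 - \<theta> $ l)"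
proof -
  have "i \<noteq> l" using i theta_center_pos by auto
  moreover have "1 - \<theta> $ l \<noteq> 0" using theta_range by (metis less_irrefl eq_iff_diff_eq_0)
  ultimately show ?thesis
    using resolvent_noncenter[OF x \<open>i \<noteq> l\<close>, unfolded i] unfolding Fmap_nth i by simp
qed

lemma trajectory_Suc: "trajectory C \<theta> x \<Longrightarrow> x (Suc s) = Fmap C \<theta> (x s)"
  unfolding trajectory_def by blast

lemma peripheral_exp_conv:
  assumes x: "trajectory C \<theta> x" and i: "i \<in> periphery" "C $ l $ i = 0"
  shows "exp_conv (\<lambda>s. x s $ i) (limval (real CARD('n)) (\<theta> $ i))"
proof -
  let ?n = "real CARD('n)" and ?t = "\<theta> $ i"
  let ?z = "limval ?n ?t"
  have t: "0 < ?t" "?t < 1" using i theta_range by auto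
  note z = limval_props[OF real_card_ge_2 t]
  note xs = trajectory_prob_simplex[OF admissible theta_range x]
  have step: "x (Suc s) $ i = (1 - ?t) / ?n / (1 - ?t * x s $ i)" for s
    using Fmap_peripheral[OF xs[of s], of i] i trajectory_Suc[OF x] by simp
  have small: "x (Suc s) $ i \<le> 1 / ?n" for s
  proof -
    have "(1 - ?t) / (1 - ?t * x s $ i) \<le> 1" by (rule theta_simplex_factor(3)[OF xs])
    then have "(1 - ?t) / (1 - ?t * x s $ i) / ?n \<le> 1 / ?n"
      using real_card_ge_2 by (intro divide_right_mono) auto
    then show ?thesis unfolding step by (simp add: mult.commute)
  qed
  have "\<bar>x (Suc (Suc s)) $ i - ?z\<bar> \<le> ?t / (?n - ?t) * \<bar>x (Suc s) $ i - ?z\<bar>" for s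
    unfolding step[of "Suc s"]
    using peripheral_step_bound[OF real_card_ge_2 _ t(2) _ small[of s] z(1-3)] t prob_simplex_nth[OF xs]
    by simp
  moreover have "0 \<le> ?t / (?n - ?t)" "?t / (?n - ?t) < 1" using t real_card_ge_2 by auto
  ultimately have "exp_conv (\<lambda>s. x (Suc s) $ i) ?z"
    by (intro exp_conv_contraction[of "?t / (?n - ?t)"]) auto
  then show ?thesis using exp_conv_Suc_iff[of "\<lambda>s. x s $ i"] by simp
qed

end

locale decoupled_star_network = star_network C \<theta> l
  for C :: "real^'n^'n" and \<theta> :: "real^'n" and l :: 'n +
  assumes periphery_decoupled: "\<forall>j\<in>periphery. C $ l $ j = 0"
    and periphery_load: "(\<Sum>j\<in>periphery. \<theta> $ j) \<le> 4 * real CARD('n) / 5 - 1"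
begin

definition xi where
  "xi x = 1 + (\<Sum>j\<in>periphery. peripheral_flow (\<theta> $ j) (x $ j))"

lemma Fmap_center:
  assumes x: "x \<in> prob_simplex"
  shows "Fmap C \<theta> x $ l = (1 - \<theta> $ l) * xi x / real CARD('n) / (1 - \<theta> $ l * x $ l)"
proof -
  let ?n = "real CARD('n)" and ?y = "resolvent C \<theta> x"
  have "(1 - x $ j) * \<theta> $ j * ?y $ j = peripheral_flow (\<theta> $ j) (x $ j) / ?n"
    if j: "j \<in> periphery" for j
  proof -
    have jl: "j \<noteq> l" "C $ l $ j = 0" using j periphery_decoupled by auto
    show ?thesis unfolding resolvent_peripheral[OF x jl] peripheral_flow_def by (simp add: mult_ac)
  qed
  then have "?y $ l * (1 - \<theta> $ l * x $ l) = xi x / ?n"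
    using resolvent_center[OF x] unfolding xi_def
    by (simp add: algebra_simps add_divide_distrib sum_divide_distrib)
  moreover have "0 < 1 - \<theta> $ l * x $ l" by (rule theta_simplex_factor(1)[OF x])
  ultimately have "?y $ l = xi x / ?n / (1 - \<theta> $ l * x $ l)"
    by (simp add: eq_divide_eq mult_ac)
  then show ?thesis unfolding Fmap_nth by simp
qed

lemma xi_bounds:
  assumes "\<forall>j\<in>periphery. 0 \<le> x $ j \<and> x $ j \<le> 1"
  shows "1 \<le> xi x" "xi x \<le> 4 * real CARD('n) / 5"
proof -
  have "0 \<le> peripheral_flow (\<theta> $ j) (x $ j) \<and> peripheral_flow (\<theta> $ j) (x $ j) \<le> \<theta> $ j"
    if "j \<in> periphery" for j
    using peripheral_flow_bounds[of "\<theta> $ j" "x $ j"] theta_range assms that by auto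
  then have "0 \<le> (\<Sum>j\<in>periphery. peripheral_flow (\<theta> $ j) (x $ j))"
    "(\<Sum>j\<in>periphery. peripheral_flow (\<theta> $ j) (x $ j)) \<le> (\<Sum>j\<in>periphery. \<theta> $ j)"
    by (auto intro: sum_nonneg sum_mono)
  then show "1 \<le> xi x" "xi x \<le> 4 * real CARD('n) / 5"
    unfolding xi_def using periphery_load by auto
qed

lemma xstar_nth:
  "xstar C \<theta> l $ i = (if i = l then xstar_l \<theta> l
     else if 0 < \<theta> $ i then limval (real CARD('n)) (\<theta> $ i)
     else 1 / real CARD('n) + (xi_star \<theta> l / real CARD('n) - xstar_l \<theta> l) * C $ l $ i)"
  unfolding xstar_def Let_def by simp

lemma xstar_periphery:
  assumes "j \<in> periphery"
  shows "xstar C \<theta> l $ j = limval (real CARD('n)) (\<theta> $ j)"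
    "0 \<le> xstar C \<theta> l $ j" "xstar C \<theta> l $ j \<le> 1"
proof -
  show xj: "xstar C \<theta> l $ j = limval (real CARD('n)) (\<theta> $ j)"
    using assms by (simp add: xstar_nth)
  have "0 < \<theta> $ j" "\<theta> $ j < 1" using assms theta_range by auto
  note z = limval_props[OF real_card_ge_2 this]
  moreover have "1 / real CARD('n) \<le> 1" using real_card_ge_2 by simp
  ultimately show "0 \<le> xstar C \<theta> l $ j" "xstar C \<theta> l $ j \<le> 1"
    unfolding xj by linarith+
qed

text \<open>\<open>\<xi>\<^sup>*\<close> as defined in the statement is the inflow \<open>\<xi>(x\<^sup>*)\<close>, because
  \<open>peripheral_flow \<theta>\<^sub>j x\<^sup>*\<^sub>j = 1 - n x\<^sup>*\<^sub>j\<close> and \<open>n - r = 1 + |periphery|\<close>.\<close>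
lemma xi_xstar: "xi (xstar C \<theta> l) = xi_star \<theta> l"
proof -
  let ?n = "real CARD('n)"
  have "(UNIV :: 'n set) = {i. \<theta> $ i = 0} \<union> insert l periphery"
  proof (rule set_eqI)
    show "i \<in> UNIV \<longleftrightarrow> i \<in> {i. \<theta> $ i = 0} \<union> insert l periphery" for i
      using theta_range[rule_format, of i] by (cases "i = l") auto
  qed
  moreover have "{i. \<theta> $ i = 0} \<inter> insert l periphery = {}" using theta_center_pos by auto
  ultimately have "CARD('n) = card {i. \<theta> $ i = 0} + card (insert l periphery)"
    by (metis card_Un_disjoint finite)
  also have "card (insert l periphery) = Suc (card periphery)" by (rule card_insert_disjoint) auto
  finally have card: "?n - real (card {i. \<theta> $ i = 0}) = 1 + real (card periphery)" by simp
  have "peripheral_flow (\<theta> $ j) (xstar C \<theta> l $ j) = 1 - ?n * limval ?n (\<theta> $ j)"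
    if "j \<in> periphery" for j
    using that theta_range peripheral_flow_limval[OF real_card_ge_2] xstar_periphery(1)[OF that]
    by auto
  then have "xi (xstar C \<theta> l) = 1 + real (card periphery) - ?n * (\<Sum>j\<in>periphery. limval ?n (\<theta> $ j))"
    unfolding xi_def by (simp add: sum_subtractf sum_distrib_left)
  then show ?thesis unfolding xi_star_def Let_def using card by simp
qed

lemma xi_star_bounds: "1 \<le> xi_star \<theta> l" "xi_star \<theta> l \<le> 4 * real CARD('n) / 5"
  using xi_bounds[of "xstar C \<theta> l"] xstar_periphery unfolding xi_xstar by auto

lemma xstar_center:
  defines "w \<equiv> xstar_l \<theta> l" and "t \<equiv> \<theta> $ l"
  shows "0 \<le> w" "w * (1 - t * w) = (1 - t) * xi_star \<theta> l / real CARD('n)"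
    "t * w < 1 - 4 * t / 5" "xi_star \<theta> l / real CARD('n) - w = t * w * (1 - w) / (1 - t)"
proof -
  let ?n = "real CARD('n)" and ?X = "xi_star \<theta> l"
  have t: "0 < t" "t < 1" unfolding t_def using theta_center_pos theta_range by auto
  note X = xi_star_bounds
  have "4 * t * ((1 - t) * ?X) = (4 * t * (1 - t)) * ?X" by (simp add: mult_ac)
  also have "\<dots> \<le> 1 * ?X" using four_mult_one_minus_le_1 X by (intro mult_right_mono) auto
  also have "\<dots> \<le> ?n" using X real_card_ge_2 by simp
  finally have "4 * t * ((1 - t) * ?X) \<le> ?n" .
  moreover have "w = (?n - sqrt (?n\<^sup>2 - 4 * ?n * t * ((1 - t) * ?X))) / (2 * ?n * t)"
    unfolding w_def t_def xstar_l_def Let_def by (simp add: mult.assoc)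
  ultimately have root: "0 \<le> w" "t * w \<le> 1/2" "w * (1 - t * w) = (1 - t) * ?X / ?n"
    using smaller_root[of ?n t "(1 - t) * ?X"] t X real_card_ge_2 by simp_all
  then show "0 \<le> w" "w * (1 - t * w) = (1 - t) * ?X / ?n" by auto
  have "?X / ?n = w * (1 - t * w) / (1 - t)" using root(3) t by (simp add: field_simps)
  then show "?X / ?n - w = t * w * (1 - w) / (1 - t)" using t by (simp add: field_simps)
  have "(t * w) * (1 - t * w) = t * ((1 - t) * ?X / ?n)" using root(3) by (simp add: mult_ac)
  also have "\<dots> \<le> t * ((1 - t) * (4 / 5))"
  proof -
    have "?X / ?n \<le> 4 / 5" using X(2) real_card_ge_2 by (simp add: divide_le_eq)
    then have "(1 - t) * (?X / ?n) \<le> (1 - t) * (4 / 5)" using t by (intro mult_left_mono) auto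
    then show ?thesis using t by (intro mult_left_mono) auto
  qed
  also have "\<dots> = 4 * t * (1 - t) / 5" by simp
  finally show "t * w < 1 - 4 * t / 5" by (rule center_root_margin[OF t(1) root(2)])
qed

lemma xi_exp_conv:
  assumes x: "trajectory C \<theta> x"
  shows "exp_conv (\<lambda>s. xi (x s)) (xi_star \<theta> l)"
proof -
  note xs = trajectory_prob_simplex[OF admissible theta_range x]
  have "exp_conv (\<lambda>s. peripheral_flow (\<theta> $ j) (x s $ j)) (peripheral_flow (\<theta> $ j) (xstar C \<theta> l $ j))"
    if j: "j \<in> periphery" for j
  proof (rule exp_conv_dominated)
    show "exp_conv (\<lambda>s. x s $ j) (xstar C \<theta> l $ j)"
      using peripheral_exp_conv[OF x j] j periphery_decoupled xstar_periphery(1)[OF j] by simp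
    show "norm (peripheral_flow (\<theta> $ j) (x s $ j) - peripheral_flow (\<theta> $ j) (xstar C \<theta> l $ j))
        \<le> \<theta> $ j / (1 - \<theta> $ j) * norm (x s $ j - xstar C \<theta> l $ j)" for s
      using peripheral_flow_lipschitz theta_range prob_simplex_nth[OF xs] xstar_periphery(2,3)[OF j]
      by simp
  qed (use theta_range[rule_format, of j] in simp)
  then have "exp_conv (\<lambda>s. xi (x s)) (xi (xstar C \<theta> l))"
    unfolding xi_def by (intro exp_conv_add exp_conv_const exp_conv_sum) auto
  then show ?thesis by (simp only: xi_xstar)
qed

lemma center_exp_conv:
  assumes x: "trajectory C \<theta> x"
  shows "exp_conv (\<lambda>s. x s $ l) (xstar_l \<theta> l)"
proof -
  let ?n = "real CARD('n)" and ?t = "\<theta> $ l" and ?w = "xstar_l \<theta> l" and ?X = "xi_star \<theta> l"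
  have t: "0 < ?t" "?t < 1" using theta_center_pos theta_range by auto
  note w = xstar_center
  note xs = trajectory_prob_simplex[OF admissible theta_range x]
  have step: "x (Suc s) $ l = (1 - ?t) * xi (x s) / ?n / (1 - ?t * x s $ l)" for s
    using Fmap_center[OF xs[of s]] trajectory_Suc[OF x] by simp
  have small: "x (Suc s) $ l \<le> 4 / 5" for s
  proof -
    have "0 \<le> (1 - ?t) / (1 - ?t * x s $ l)" "(1 - ?t) / (1 - ?t * x s $ l) \<le> 1"
      using theta_simplex_factor(2,3)[OF xs[of s], of l] by auto
    moreover have "0 \<le> xi (x s) / ?n" "xi (x s) / ?n \<le> 4 / 5"
      using xi_bounds[of "x s"] prob_simplex_nth[OF xs] real_card_ge_2 by (auto simp: divide_le_eq)
    ultimately have "(1 - ?t) / (1 - ?t * x s $ l) * (xi (x s) / ?n) \<le> 4 / 5"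
      using mult_left_le_one_le[of "xi (x s) / ?n" "(1 - ?t) / (1 - ?t * x s $ l)"] by linarith
    then show ?thesis unfolding step by (simp add: mult.commute)
  qed
  have n: "0 < ?n" using real_card_ge_2 by simp
  have "\<bar>x (Suc (Suc s)) $ l - ?w\<bar>
      \<le> ?t * ?w / (1 - 4 * ?t / 5) * \<bar>x (Suc s) $ l - ?w\<bar> + \<bar>xi (x (Suc s)) - ?X\<bar> / ?n" for s
    unfolding step[of "Suc s"]
    by (rule center_step_bound[OF n t prob_simplex_nth(1)[OF xs] small w(1,2)])
  then have contr: "\<bar>x (Suc (Suc s)) $ l - ?w\<bar>
      \<le> ?t * ?w / (1 - 4 * ?t / 5) * \<bar>x (Suc s) $ l - ?w\<bar> + 1 / ?n * \<bar>xi (x (Suc s)) - ?X\<bar>" for s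
    by simp
  have conv: "exp_conv (\<lambda>s. xi (x (Suc s))) ?X"
    using xi_exp_conv[OF x] exp_conv_Suc_iff[of "\<lambda>s. xi (x s)"] by simp
  have q: "0 \<le> ?t * ?w / (1 - 4 * ?t / 5)" "?t * ?w / (1 - 4 * ?t / 5) < 1"
    using t w(1) divide_less_eq_1_pos[of "1 - 4 * ?t / 5" "?t * ?w"] w(3) by auto
  have "exp_conv (\<lambda>s. x (Suc s) $ l) ?w"
    by (rule exp_conv_perturbed_contraction[OF conv q _ contr]) (use n in simp)
  then show ?thesis using exp_conv_Suc_iff[of "\<lambda>s. x s $ l"] by simp
qed

lemma follower_exp_conv:
  assumes x: "trajectory C \<theta> x" and i: "\<theta> $ i = 0"
  shows "exp_conv (\<lambda>s. x s $ i) (xstar C \<theta> l $ i)"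
proof -
  let ?n = "real CARD('n)" and ?t = "\<theta> $ l" and ?w = "xstar_l \<theta> l" and ?X = "xi_star \<theta> l"
  define \<kappa> where "\<kappa> = C $ l $ i * ?t / (1 - ?t)"
  have t: "0 < ?t" "?t < 1" using theta_center_pos theta_range by auto
  have il: "i \<noteq> l" using i theta_center_pos by auto
  note xs = trajectory_prob_simplex[OF admissible theta_range x]
  have step: "x (Suc s) $ i = 1 / ?n + \<kappa> * ((1 - x s $ l) * x (Suc s) $ l)" for s
    using Fmap_follower[OF xs[of s] i] trajectory_Suc[OF x, of s] t unfolding \<kappa>_def
    by (simp add: field_simps)
  have limit: "xstar C \<theta> l $ i = 1 / ?n + \<kappa> * ((1 - ?w) * ?w)"
    using i il xstar_center(4) unfolding xstar_nth \<kappa>_def by simp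
  have "exp_conv (\<lambda>s. 1 - x s $ l) (1 - ?w)"
    by (rule exp_conv_dominated[OF center_exp_conv[OF x], of 1]) simp_all
  moreover have "exp_conv (\<lambda>s. x (Suc s) $ l) ?w"
    using center_exp_conv[OF x] exp_conv_Suc_iff[of "\<lambda>s. x s $ l"] by simp
  ultimately have "exp_conv (\<lambda>s. 1 / ?n + \<kappa> * ((1 - x s $ l) * x (Suc s) $ l))
      (1 / ?n + \<kappa> * ((1 - ?w) * ?w))"
    by (intro exp_conv_add exp_conv_const exp_conv_mult)
  then have "exp_conv (\<lambda>s. x (Suc s) $ i) (xstar C \<theta> l $ i)"
    unfolding step limit .
  then show ?thesis using exp_conv_Suc_iff[of "\<lambda>s. x s $ i"] by simp
qed

lemma trajectory_exp_conv:
  assumes x: "trajectory C \<theta> x"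
  shows "exp_conv x (xstar C \<theta> l)"
proof (rule exp_conv_vec)
  fix i
  consider "i = l" | "i \<in> periphery" | "\<theta> $ i = 0"
    using theta_range[rule_format, of i] by force
  then show "exp_conv (\<lambda>s. x s $ i) (xstar C \<theta> l $ i)"
  proof cases
    case 1
    then show ?thesis using center_exp_conv[OF x] by (simp add: xstar_nth)
  next
    case 2
    then show ?thesis
      using peripheral_exp_conv[OF x] periphery_decoupled xstar_periphery(1) by simp
  next
    case 3
    then show ?thesis by (rule follower_exp_conv[OF x])
  qed
qed

lemma xstar_prob_simplex: "xstar C \<theta> l \<in> prob_simplex"
proof -
  define x0 :: "real^'n" where "x0 = (\<chi> i. if i = l then 1 else 0)"
  define x where "x s = (Fmap C \<theta> ^^ s) x0" for s
  have "x0 \<in> prob_simplex" unfolding prob_simplex_def x0_def by simp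
  then have x: "trajectory C \<theta> x" unfolding trajectory_def x_def by simp
  note xs = trajectory_prob_simplex[OF admissible theta_range x]
  have lim: "x \<longlonglongrightarrow> xstar C \<theta> l"
    by (rule exp_conv_imp_LIMSEQ[OF trajectory_exp_conv[OF x]])
  have "0 \<le> xstar C \<theta> l $ i" for i
    by (rule LIMSEQ_le_const[OF tendsto_vec_nth[OF lim]]) (use prob_simplex_nth(1)[OF xs] in auto)
  moreover have "(\<lambda>s. \<Sum>i\<in>UNIV. x s $ i) \<longlonglongrightarrow> (\<Sum>i\<in>UNIV. xstar C \<theta> l $ i)"
    by (intro tendsto_sum tendsto_vec_nth[OF lim])
  then have "(\<Sum>i\<in>UNIV. xstar C \<theta> l $ i) = 1"
    using xs unfolding prob_simplex_def by (simp add: LIMSEQ_const_iff)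
  ultimately show ?thesis unfolding prob_simplex_def by simp
qed

lemma Fmap_xstar: "Fmap C \<theta> (xstar C \<theta> l) = xstar C \<theta> l"
proof -
  let ?x = "xstar C \<theta> l" and ?n = "real CARD('n)"
  let ?t = "\<theta> $ l" and ?w = "xstar_l \<theta> l" and ?X = "xi_star \<theta> l"
  have t: "0 < ?t" "?t < 1" using theta_center_pos theta_range by auto
  have w: "1 - ?t * ?w \<noteq> 0" using xstar_center(3) t by simp
  have "Fmap C \<theta> ?x $ l = (1 - ?t) * ?X / ?n / (1 - ?t * ?w)"
    using Fmap_center[OF xstar_prob_simplex] unfolding xi_xstar by (simp add: xstar_nth)
  also have "\<dots> = ?w" using w by (simp add: xstar_center(2)[symmetric])
  finally have center: "Fmap C \<theta> ?x $ l = ?w" .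
  show ?thesis
  proof (rule vec_eq_iff[THEN iffD2], intro allI)
    fix i
    consider "i = l" | "i \<in> periphery" | "\<theta> $ i = 0"
      using theta_range[rule_format, of i] by force
    then show "Fmap C \<theta> ?x $ i = ?x $ i"
    proof cases
      case 1
      then show ?thesis using center by (simp add: xstar_nth)
    next
      case 2
      have ti: "0 < \<theta> $ i" "\<theta> $ i < 1" using 2 theta_range by auto
      note z = limval_props[OF real_card_ge_2 ti]
      have "1 - \<theta> $ i * limval ?n (\<theta> $ i) \<noteq> 0" using z(4) by simp
      then show ?thesis
        using Fmap_peripheral[OF xstar_prob_simplex] 2 periphery_decoupled z(3)
          xstar_periphery(1)[OF 2] by (simp add: field_simps)
    next
      case 3
      have "i \<noteq> l" using 3 theta_center_pos by auto
      then show ?thesis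
        using Fmap_follower[OF xstar_prob_simplex 3] center 3 xstar_center(4)
        by (simp add: xstar_nth mult_ac)
    qed
  qed
qed

lemma fixed_point_unique:
  assumes "y \<in> prob_simplex" "Fmap C \<theta> y = y"
  shows "y = xstar C \<theta> l"
proof -
  have "trajectory C \<theta> (\<lambda>s. y)" using assms unfolding trajectory_def by simp
  then have "(\<lambda>s. y) \<longlonglongrightarrow> xstar C \<theta> l"
    by (rule exp_conv_imp_LIMSEQ[OF trajectory_exp_conv])
  then show ?thesis by (simp add: LIMSEQ_const_iff)
qed

end

theorem theorem5:
  fixes C :: "real^'n^'n" and \<theta> :: "real^'n" and l :: 'n
  assumes n2: "CARD('n) \<ge> 2"
    and C: "admissible_C C"
    and th_nonneg: "\<forall>i. 0 \<le> \<theta> $ i"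
    and th_lt1: "\<forall>i. \<theta> $ i < 1"
    and th_some: "\<exists>j. 0 < \<theta> $ j"
    and star: "star_topology C l"
    and thl: "0 < \<theta> $ l" "\<theta> $ l < 1"
  shows "(\<forall>i. 0 < \<theta> $ i \<and> i \<noteq> l \<and> C $ l $ i = 0 \<longrightarrow>
            (\<forall>x. trajectory C \<theta> x \<longrightarrow>
               exp_conv (\<lambda>s. x s $ i) (limval (real CARD('n)) (\<theta> $ i))))
       \<and> ((\<forall>i. 0 < \<theta> $ i \<and> i \<noteq> l \<longrightarrow> C $ l $ i = 0)
           \<and> (\<Sum>j\<in>{j. 0 < \<theta> $ j \<and> j \<noteq> l}. \<theta> $ j) \<le> 4 * real CARD('n) / 5 - 1
          \<longrightarrow> xstar C \<theta> l \<in> prob_simplex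
            \<and> Fmap C \<theta> (xstar C \<theta> l) = xstar C \<theta> l
            \<and> (\<forall>y\<in>prob_simplex. Fmap C \<theta> y = y \<longrightarrow> y = xstar C \<theta> l)
            \<and> (\<forall>x. trajectory C \<theta> x \<longrightarrow> exp_conv x (xstar C \<theta> l)))"
proof -
  interpret star_network C \<theta> l
    using n2 C th_nonneg th_lt1 star thl by unfold_locales auto
  have part_i: "\<forall>i. 0 < \<theta> $ i \<and> i \<noteq> l \<and> C $ l $ i = 0 \<longrightarrow>
      (\<forall>x. trajectory C \<theta> x \<longrightarrow> exp_conv (\<lambda>s. x s $ i) (limval (real CARD('n)) (\<theta> $ i)))"
    using peripheral_exp_conv by blast
  have part_ii: "xstar C \<theta> l \<in> prob_simplex
      \<and> Fmap C \<theta> (xstar C \<theta> l) = xstar C \<theta> l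
      \<and> (\<forall>y\<in>prob_simplex. Fmap C \<theta> y = y \<longrightarrow> y = xstar C \<theta> l)
      \<and> (\<forall>x. trajectory C \<theta> x \<longrightarrow> exp_conv x (xstar C \<theta> l))"
    if "(\<forall>i. 0 < \<theta> $ i \<and> i \<noteq> l \<longrightarrow> C $ l $ i = 0)
      \<and> (\<Sum>j\<in>{j. 0 < \<theta> $ j \<and> j \<noteq> l}. \<theta> $ j) \<le> 4 * real CARD('n) / 5 - 1"
  proof -
    interpret decoupled_star_network C \<theta> l
      using that by unfold_locales auto
    show ?thesis
      using xstar_prob_simplex Fmap_xstar fixed_point_unique trajectory_exp_conv by blast
  qed
  show ?thesis using part_i part_ii by blast
qed

end
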